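(* Let $R$ be a finite local Frobenius ring, not a field and of odd characteristic, with a fixed primitive additive character $\psi$. Let $\tau$ be a non-primitive multiplicative character and $\chi$ a non-primitive multiplicative character of $R$. Then $$\sum_{a\in R^\times}\chi(a)\,|K_\tau(a)|^2=\begin{cases}|R^\times|\,|R| & \text{if }\chi=\mathbb{1}\text{ or }\chi=\sigma,\\ 0&\text{otherwise.}\end{cases}$$
   Context: All rings are finite and commutative with identity; $R^\times$ is the unit group; $M$ is the maximal ideal. An additive character $(R,+)\to\mathbb{C}^*$ is primitive if the only ideal on which it is identically $1$ is $(0)$; $R$ is Frobenius if such a character exists. A multiplicative character is a homomorphism $R^\times\to\mathbb{C}^*$; $\mathbb{1}$ is the trivial one; its conductor is $R$ if it is trivial, and otherwise the largest ideal $I\subseteq M$ such that it is identically $1$ on $1+I$; it is primitive if its conductor is $(0)$. $K_\tau(a)=\sum_{u\in R^\times}\tau(u)\psi(u+au^{-1})$. Odd characteristic means $R/M$ has odd characteristic; the quadratic character $\sigma$ sends $u\in R^\times$ to the quadratic character of its residue class in $R/M$. *)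

theory Defs
  imports Complex_Main
begin

(* Finite commutative rings with identity are modelled by a type 'a :: {comm_ring_1, finite}. *)

definition ring_ideal :: "'a::comm_ring_1 set \<Rightarrow> bool" where
  "ring_ideal I \<longleftrightarrow> 0 \<in> I \<and> (\<forall>x\<in>I. \<forall>y\<in>I. x + y \<in> I) \<and> (\<forall>r x. x \<in> I \<longrightarrow> r * x \<in> I)"

definition maximal_ideal :: "'a::comm_ring_1 set \<Rightarrow> bool" where
  "maximal_ideal M \<longleftrightarrow> ring_ideal M \<and> M \<noteq> UNIV \<and>
     (\<forall>J. ring_ideal J \<and> M \<subseteq> J \<longrightarrow> J = M \<or> J = UNIV)"

definition local_ring :: "'a::comm_ring_1 itself \<Rightarrow> bool" where
  "local_ring _ \<longleftrightarrow> (\<exists>!M::'a set. maximal_ideal M)"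

definition max_ideal :: "'a::comm_ring_1 set" where
  "max_ideal = (THE M. maximal_ideal M)"

definition units :: "'a::comm_ring_1 set" where
  "units = {u. u dvd 1}"

definition unit_inv :: "'a::comm_ring_1 \<Rightarrow> 'a" where
  "unit_inv u = (THE v. u * v = 1)"

definition is_field_ring :: "'a::comm_ring_1 itself \<Rightarrow> bool" where
  "is_field_ring _ \<longleftrightarrow> (0::'a) \<noteq> 1 \<and> (\<forall>x::'a. x \<noteq> 0 \<longrightarrow> x dvd 1)"

definition residue_char :: "'a::comm_ring_1 itself \<Rightarrow> nat" where
  "residue_char _ = (LEAST n. n > 0 \<and> (of_nat n :: 'a) \<in> max_ideal)"

definition add_char :: "('a::comm_ring_1 \<Rightarrow> complex) \<Rightarrow> bool" where
  "add_char \<psi> \<longleftrightarrow> (\<forall>x y. \<psi> (x + y) = \<psi> x * \<psi> y) \<and> (\<forall>x. \<psi> x \<noteq> 0)"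

definition primitive_add_char :: "('a::comm_ring_1 \<Rightarrow> complex) \<Rightarrow> bool" where
  "primitive_add_char \<psi> \<longleftrightarrow> add_char \<psi> \<and>
     (\<forall>I. ring_ideal I \<and> (\<forall>x\<in>I. \<psi> x = 1) \<longrightarrow> I = {0})"

definition frobenius :: "'a::comm_ring_1 itself \<Rightarrow> bool" where
  "frobenius _ \<longleftrightarrow> (\<exists>\<psi>::'a \<Rightarrow> complex. primitive_add_char \<psi>)"

(* multiplicative character R^x \<rightarrow> C^*; only the values on units matter *)
definition mult_char :: "('a::comm_ring_1 \<Rightarrow> complex) \<Rightarrow> bool" where
  "mult_char \<chi> \<longleftrightarrow> (\<forall>u\<in>units. \<forall>v\<in>units. \<chi> (u * v) = \<chi> u * \<chi> v) \<and> (\<forall>u\<in>units. \<chi> u \<noteq> 0)"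

definition trivial_char :: "('a::comm_ring_1 \<Rightarrow> complex) \<Rightarrow> bool" where
  "trivial_char \<chi> \<longleftrightarrow> (\<forall>u\<in>units. \<chi> u = 1)"

definition conductor :: "('a::comm_ring_1 \<Rightarrow> complex) \<Rightarrow> 'a set" where
  "conductor \<chi> = (if trivial_char \<chi> then UNIV else
     (THE I. (ring_ideal I \<and> I \<subseteq> max_ideal \<and> (\<forall>x\<in>I. \<chi> (1 + x) = 1)) \<and>
        (\<forall>J. ring_ideal J \<and> J \<subseteq> max_ideal \<and> (\<forall>x\<in>J. \<chi> (1 + x) = 1) \<longrightarrow> J \<subseteq> I)))"

definition primitive_mult_char :: "('a::comm_ring_1 \<Rightarrow> complex) \<Rightarrow> bool" where
  "primitive_mult_char \<chi> \<longleftrightarrow> conductor \<chi> = {0}"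

definition quad_char :: "'a::comm_ring_1 \<Rightarrow> complex" where
  "quad_char u = (if \<exists>v. u - v * v \<in> max_ideal then 1 else -1)"

definition kloosterman :: "('a::comm_ring_1 \<Rightarrow> complex) \<Rightarrow> ('a \<Rightarrow> complex) \<Rightarrow> 'a \<Rightarrow> complex" where
  "kloosterman \<psi> \<tau> a = (\<Sum>u\<in>units. \<tau> u * \<psi> (u + a * unit_inv u))"

end

theory Submission
  imports Defs
begin

text \<open>
  Expanding \<open>|K\<^sub>\<tau>(a)|\<^sup>2\<close> as a double sum and substituting \<open>a = v b\<close>, \<open>u = v t\<close> turns the
  left-hand side into \<open>\<Sum>\<^sub>t \<tau>(t) G(t - 1) G(t\<inverse> - 1)\<close>, where \<open>G(b) = \<Sum>\<^sub>a \<chi>(a) \<psi>(a b)\<close>.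
  In a local Frobenius ring that is not a field every nonzero ideal contains the socle
  \<open>Ann(M)\<close>; hence a non-primitive \<open>\<chi>\<close> is trivial on \<open>1 + Ann(M)\<close> while \<open>\<psi>\<close> is not trivial on
  \<open>Ann(M)\<close>, and this makes \<open>G\<close> vanish on units. Only \<open>t = 1 + m\<close> with \<open>m \<in> M\<close> survive, leaving
  \<open>\<chi>(-1) \<Sum>\<^sub>m\<^sub>\<in>\<^sub>M \<tau>(1 + m) \<chi>(1 + m) G(m)\<^sup>2\<close>. If \<open>\<chi>\<close> is trivial on \<open>1 + M\<close>, then \<open>G(m) \<noteq> 0\<close> forces
  \<open>m \<in> Ann(M)\<close>, where \<open>G\<close> is explicit, and both \<open>\<chi> = \<one>\<close> and \<open>\<chi> = \<sigma>\<close> give \<open>|R\<^sup>\<times>| |R|\<close>.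
  Otherwise there is a unit \<open>c\<close> with \<open>\<chi>(c)\<^sup>2 \<noteq> 1\<close> such that \<open>m \<mapsto> c m\<close> multiplies every summand
  by \<open>\<chi>(c)\<^sup>-\<^sup>2\<close>, so the sum vanishes; odd characteristic is what produces such a \<open>c\<close> when
  \<open>\<chi>\<close> is nontrivial on \<open>1 + M\<close>.
\<close>

section \<open>Units and ideals\<close>

lemma unit_inv_eqI:
  fixes u :: "'a::comm_ring_1"
  assumes "u * v = 1" shows "unit_inv u = v"
  unfolding unit_inv_def
proof (rule the_equality)
  fix w assume "u * w = 1"
  then show "w = v" using assms by (metis mult.left_commute mult_1_right)
qed (fact assms)

lemma units_iff: "(u::'a::comm_ring_1) \<in> units \<longleftrightarrow> (\<exists>v. u * v = 1)"
  by (auto simp: units_def dvd_def)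

lemma unit_inv_right: "(u::'a::comm_ring_1) \<in> units \<Longrightarrow> u * unit_inv u = 1"
  using unit_inv_eqI units_iff by metis

lemma unit_inv_left: "(u::'a::comm_ring_1) \<in> units \<Longrightarrow> unit_inv u * u = 1"
  using unit_inv_right by (metis mult.commute)

lemma unit_inv_in_units: "(u::'a::comm_ring_1) \<in> units \<Longrightarrow> unit_inv u \<in> units"
  using unit_inv_left units_iff by blast

lemma units_mult_closed: "(u::'a::comm_ring_1) \<in> units \<Longrightarrow> v \<in> units \<Longrightarrow> u * v \<in> units"
  using mult_dvd_mono[of u 1 v 1] by (simp add: units_def)

lemma units_power_closed: "(u::'a::comm_ring_1) \<in> units \<Longrightarrow> u ^ n \<in> units"
  using dvd_power_same[of u 1 n] by (simp add: units_def)

lemma one_in_units [simp]: "(1::'a::comm_ring_1) \<in> units"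
  by (simp add: units_def)

lemma uminus_in_units: "(u::'a::comm_ring_1) \<in> units \<Longrightarrow> - u \<in> units"
  by (simp add: units_def)

lemma unit_inv_mult:
  "(u::'a::comm_ring_1) \<in> units \<Longrightarrow> v \<in> units \<Longrightarrow> unit_inv (u * v) = unit_inv u * unit_inv v"
  by (rule unit_inv_eqI) (metis mult.left_commute mult.assoc unit_inv_right mult_1_right)

lemma unit_inv_unit_inv: "(u::'a::comm_ring_1) \<in> units \<Longrightarrow> unit_inv (unit_inv u) = u"
  by (rule unit_inv_eqI) (rule unit_inv_left)

lemma unit_inv_uminus: "(u::'a::comm_ring_1) \<in> units \<Longrightarrow> unit_inv (- u) = - unit_inv u"
  by (rule unit_inv_eqI) (simp add: unit_inv_right)

lemma units_mult_left_cancel: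
  "(u::'a::comm_ring_1) \<in> units \<Longrightarrow> u * x = u * y \<longleftrightarrow> x = y"
  by (metis mult.assoc mult_1_left unit_inv_left)

lemma units_mult_eq_0_iff: "(u::'a::comm_ring_1) \<in> units \<Longrightarrow> u * x = 0 \<longleftrightarrow> x = 0"
  using units_mult_left_cancel[of u x 0] by simp

lemma bij_betw_mult_units:
  "(v::'a::comm_ring_1) \<in> units \<Longrightarrow> bij_betw (\<lambda>t. v * t) units units"
  by (rule bij_betw_byWitness[where f'="\<lambda>t. unit_inv v * t"])
     (auto simp: mult.assoc[symmetric] unit_inv_left unit_inv_right units_mult_closed unit_inv_in_units)

lemma ring_ideal_mult: "ring_ideal I \<Longrightarrow> x \<in> I \<Longrightarrow> r * x \<in> I"
  by (simp add: ring_ideal_def)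

lemma ring_ideal_add: "ring_ideal I \<Longrightarrow> x \<in> I \<Longrightarrow> y \<in> I \<Longrightarrow> x + y \<in> I"
  by (simp add: ring_ideal_def)

lemma ring_ideal_zero: "ring_ideal I \<Longrightarrow> 0 \<in> I"
  by (simp add: ring_ideal_def)

lemma ring_ideal_uminus: "ring_ideal I \<Longrightarrow> x \<in> I \<Longrightarrow> - x \<in> I"
  using ring_ideal_mult[of I x "-1"] by simp

lemma ring_ideal_diff: "ring_ideal I \<Longrightarrow> x \<in> I \<Longrightarrow> y \<in> I \<Longrightarrow> x - y \<in> I"
  by (metis diff_conv_add_uminus ring_ideal_add ring_ideal_uminus)

lemma ring_ideal_UNIV: "ring_ideal (UNIV::'a::comm_ring_1 set)"
  by (simp add: ring_ideal_def)

lemma ring_ideal_zero_set: "ring_ideal ({0}::'a::comm_ring_1 set)"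
  by (simp add: ring_ideal_def)

lemma ring_ideal_principal: "ring_ideal (range (\<lambda>r. r * (x::'a::comm_ring_1)))"
  unfolding ring_ideal_def
  by (auto simp: image_iff) (metis mult_zero_left, metis distrib_right, metis mult.assoc)

lemma ring_ideal_image_mult: "ring_ideal J \<Longrightarrow> ring_ideal ((\<lambda>j. j * (m::'a::comm_ring_1)) ` J)"
  unfolding ring_ideal_def
  by (auto simp: image_iff) (metis mult_zero_left, metis distrib_right, metis mult.assoc)

section \<open>Characters of finite rings\<close>

lemma finite_nat_seq_repeats:
  fixes f :: "nat \<Rightarrow> 'a::finite"
  obtains i j where "i < j" "f i = f j"
proof -
  have "\<not> inj f"
    using finite_imageD[of f UNIV] infinite_UNIV_nat by auto
  then obtain i j where "i \<noteq> j" "f i = f j" unfolding inj_def by blast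
  then show ?thesis using that by (metis linorder_neqE_nat)
qed

lemma units_power_eq_one:
  fixes u :: "'a::{comm_ring_1,finite}"
  assumes "u \<in> units" obtains n where "n > 0" "u ^ n = 1"
proof -
  obtain i j where ij: "i < j" "u ^ i = u ^ j" using finite_nat_seq_repeats[of "\<lambda>n. u ^ n"] .
  then have "u ^ i * u ^ (j - i) = u ^ i * 1"
    by (metis power_add le_add_diff_inverse less_imp_le mult_1_right)
  then have "u ^ (j - i) = 1" using units_mult_left_cancel units_power_closed assms by metis
  then show ?thesis using that[of "j - i"] ij(1) by simp
qed

lemma of_nat_mult_eq_zero:
  fixes x :: "'a::{comm_ring_1,finite}"
  obtains n where "n > 0" "of_nat n * x = 0"
proof -
  obtain i j where ij: "i < j" "of_nat i * x = of_nat j * x"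
    using finite_nat_seq_repeats[of "\<lambda>n. of_nat n * x"] .
  then have "of_nat (j - i) * x = 0" by (simp add: of_nat_diff left_diff_distrib)
  then show ?thesis using that[of "j - i"] ij(1) by simp
qed

lemma cnj_mult_self_root_of_unity: "(z::complex) ^ n = 1 \<Longrightarrow> n > 0 \<Longrightarrow> cnj z * z = 1"
  using power_eq_1_iff[of z n] complex_norm_square[of z] by (simp add: mult.commute)

lemma add_char_add: "add_char \<psi> \<Longrightarrow> \<psi> (x + y) = \<psi> x * \<psi> y"
  by (simp add: add_char_def)

lemma add_char_zero: "add_char \<psi> \<Longrightarrow> \<psi> 0 = 1"
  using add_char_add[of \<psi> 0 0] by (simp add: add_char_def)

lemma add_char_uminus: "add_char \<psi> \<Longrightarrow> \<psi> (- x) * \<psi> x = 1"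
  using add_char_add[of \<psi> "- x" x] add_char_zero[of \<psi>] by simp

lemma add_char_of_nat_mult: "add_char \<psi> \<Longrightarrow> \<psi> (of_nat n * x) = \<psi> x ^ n"
  by (induct n) (simp_all add: add_char_zero add_char_add distrib_right)

lemma add_char_cnj:
  fixes \<psi> :: "'a::{comm_ring_1,finite} \<Rightarrow> complex"
  assumes "add_char \<psi>" shows "cnj (\<psi> x) = \<psi> (- x)"
proof -
  obtain n where n: "n > 0" "of_nat n * x = 0" by (rule of_nat_mult_eq_zero)
  then have "\<psi> x ^ n = 1" using add_char_of_nat_mult[OF assms, of n x] add_char_zero[OF assms] by simp
  then have "cnj (\<psi> x) * \<psi> x = 1" using n(1) by (rule cnj_mult_self_root_of_unity)
  then show ?thesis using add_char_uminus[OF assms] assms by (metis add_char_def mult_right_cancel)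
qed

lemma add_char_mult_left: "add_char \<psi> \<Longrightarrow> add_char (\<lambda>s. \<psi> (r * s))"
  by (simp add: add_char_def distrib_left)

lemma add_char_sum_ideal_eq_0:
  assumes \<psi>: "add_char \<psi>" and J: "ring_ideal J" "finite J"
    and s0: "s0 \<in> J" "\<psi> s0 \<noteq> 1"
  shows "(\<Sum>s\<in>J. \<psi> s) = 0"
proof -
  have "bij_betw (\<lambda>s. s + s0) J J"
    by (rule bij_betw_byWitness[where f'="\<lambda>s. s - s0"])
       (auto intro: ring_ideal_add[OF J(1)] ring_ideal_diff[OF J(1)] s0)
  then have "(\<Sum>s\<in>J. \<psi> s) = (\<Sum>s\<in>J. \<psi> (s + s0))"
    by (rule sum.reindex_bij_betw[symmetric])
  also have "\<dots> = \<psi> s0 * (\<Sum>s\<in>J. \<psi> s)"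
    by (simp add: add_char_add[OF \<psi>] sum_distrib_left mult.commute)
  finally show ?thesis using s0(2) by (metis mult_cancel_right1)
qed

lemma add_char_sum_ideal:
  assumes "add_char \<psi>" "ring_ideal J" "finite J"
  shows "(\<Sum>s\<in>J. \<psi> s) = (if \<forall>s\<in>J. \<psi> s = 1 then of_nat (card J) else 0)"
  using add_char_sum_ideal_eq_0[OF assms] by auto

lemma primitive_add_char_sum_mult:
  fixes \<psi> :: "'a::{comm_ring_1,finite} \<Rightarrow> complex"
  assumes \<psi>: "primitive_add_char \<psi>" and "s \<noteq> 0"
  shows "(\<Sum>r\<in>UNIV. \<psi> (r * s)) = 0"
proof -
  have "range (\<lambda>r. r * s) \<noteq> {0}" using assms(2) by (metis mult_1_left rangeI singletonD)
  then obtain r0 where "\<psi> (r0 * s) \<noteq> 1"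
    using \<psi> ring_ideal_principal unfolding primitive_add_char_def by blast
  moreover have "add_char (\<lambda>r. \<psi> (r * s))"
    using \<psi> by (simp add: primitive_add_char_def add_char_def distrib_right)
  ultimately show ?thesis
    using add_char_sum_ideal_eq_0[of "\<lambda>r. \<psi> (r * s)" UNIV r0] by (simp add: ring_ideal_UNIV)
qed

lemma mult_char_mult: "mult_char \<chi> \<Longrightarrow> u \<in> units \<Longrightarrow> v \<in> units \<Longrightarrow> \<chi> (u * v) = \<chi> u * \<chi> v"
  by (simp add: mult_char_def)

lemma mult_char_nonzero: "mult_char \<chi> \<Longrightarrow> u \<in> units \<Longrightarrow> \<chi> u \<noteq> 0"
  by (simp add: mult_char_def)

lemma mult_char_one: "mult_char \<chi> \<Longrightarrow> \<chi> 1 = 1"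
  using mult_char_mult[of \<chi> 1 1] mult_char_nonzero[of \<chi> 1] by simp

lemma mult_char_unit_inv: "mult_char \<chi> \<Longrightarrow> u \<in> units \<Longrightarrow> \<chi> (unit_inv u) * \<chi> u = 1"
  by (metis mult_char_mult mult_char_one unit_inv_in_units unit_inv_left)

lemma mult_char_power: "mult_char \<chi> \<Longrightarrow> u \<in> units \<Longrightarrow> \<chi> (u ^ n) = \<chi> u ^ n"
  by (induct n) (simp_all add: mult_char_one mult_char_mult units_power_closed)

lemma mult_char_cnj:
  fixes \<chi> :: "'a::{comm_ring_1,finite} \<Rightarrow> complex"
  assumes "mult_char \<chi>" "u \<in> units" shows "cnj (\<chi> u) = \<chi> (unit_inv u)"
proof -
  obtain n where n: "n > 0" "u ^ n = 1" using units_power_eq_one[OF assms(2)] .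
  then have "\<chi> u ^ n = 1" using mult_char_power[OF assms] mult_char_one[OF assms(1)] by metis
  then have "cnj (\<chi> u) * \<chi> u = 1" using n(1) by (rule cnj_mult_self_root_of_unity)
  then show ?thesis using mult_char_unit_inv[OF assms] mult_char_nonzero[OF assms] by (metis mult_right_cancel)
qed

lemma mult_char_sum_units:
  assumes \<chi>: "mult_char \<chi>" and "\<not> trivial_char \<chi>" and "finite (units :: 'a::comm_ring_1 set)"
  shows "(\<Sum>a\<in>(units :: 'a set). \<chi> a) = 0"
proof -
  obtain c where c: "c \<in> units" "\<chi> c \<noteq> 1" using assms(2) by (auto simp: trivial_char_def)
  have "(\<Sum>a\<in>units. \<chi> a) = (\<Sum>a\<in>units. \<chi> (c * a))"
    using sum.reindex_bij_betw[OF bij_betw_mult_units[OF c(1)], of \<chi>] by simp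
  also have "\<dots> = \<chi> c * (\<Sum>a\<in>units. \<chi> a)"
    by (simp add: sum_distrib_left mult_char_mult[OF \<chi> c(1)])
  finally show ?thesis using c(2) by (metis mult_cancel_right1)
qed

lemma card_range_mult_card_annihilator:
  fixes z :: "'a::{comm_ring_1,finite}"
  shows "card (range (\<lambda>r. r * z)) * card {r. r * z = 0} = card (UNIV :: 'a set)"
proof -
  have fibre: "card {r. r * z = y} = card {r. r * z = 0}" if y: "y \<in> range (\<lambda>r. r * z)" for y
  proof -
    obtain r0 where r0: "y = r0 * z" using y by blast
    have "{r. r * z = y} = (\<lambda>m. r0 + m) ` {r. r * z = 0}"
    proof (intro set_eqI iffI)
      fix r assume "r \<in> {r. r * z = y}"
      then show "r \<in> (\<lambda>m. r0 + m) ` {r. r * z = 0}"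
        using r0 by (intro image_eqI[where x="r - r0"]) (simp_all add: algebra_simps)
    next
      fix r assume "r \<in> (\<lambda>m. r0 + m) ` {r. r * z = 0}"
      then show "r \<in> {r. r * z = y}" using r0 by (auto simp: algebra_simps)
    qed
    then show ?thesis by (simp add: card_image)
  qed
  have "card {y \<in> range (\<lambda>r. r * z). r' * z = y} = 1" for r'
  proof -
    have "{y \<in> range (\<lambda>r. r * z). r' * z = y} = {r' * z}" by auto
    then show ?thesis by simp
  qed
  then have "(\<Sum>y\<in>range (\<lambda>r. r * z). card {r \<in> UNIV. r * z = y}) = 1 * card (UNIV :: 'a set)"
    by (intro sum_multicount) simp_all
  then show ?thesis using fibre by simp
qed

lemma card_ideal_mult_card_char_annihilator:
  fixes \<psi> :: "'a::{comm_ring_1,finite} \<Rightarrow> complex"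
  assumes \<psi>: "primitive_add_char \<psi>" and J: "ring_ideal J"
  shows "card J * card {r. \<forall>s\<in>J. \<psi> (r * s) = 1} = card (UNIV :: 'a set)"
proof -
  have \<psi>_add: "add_char \<psi>" using \<psi> by (simp add: primitive_add_char_def)
  have "(\<Sum>s\<in>J. \<Sum>r\<in>UNIV. \<psi> (r * s)) = (\<Sum>s\<in>J. if s = 0 then of_nat (card (UNIV :: 'a set)) else 0)"
    using primitive_add_char_sum_mult[OF \<psi>] add_char_zero[OF \<psi>_add] by (intro sum.cong) auto
  also have "\<dots> = of_nat (card (UNIV :: 'a set))"
    using ring_ideal_zero[OF J] by simp
  finally have "of_nat (card (UNIV :: 'a set)) = (\<Sum>r\<in>UNIV. \<Sum>s\<in>J. \<psi> (r * s))"
    by (simp add: sum.swap[of _ J])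
  also have "\<dots> = (\<Sum>r\<in>UNIV. if \<forall>s\<in>J. \<psi> (r * s) = 1 then of_nat (card J) else 0)"
    using add_char_sum_ideal[OF add_char_mult_left[OF \<psi>_add] J] by simp
  also have "\<dots> = of_nat (card J * card {r. \<forall>s\<in>J. \<psi> (r * s) = 1})"
    by (simp add: sum.If_cases)
  finally show ?thesis by (simp only: of_nat_eq_iff)
qed

section \<open>Gauss sums and the second moment of Kloosterman sums\<close>

definition gauss_sum :: "('a::comm_ring_1 \<Rightarrow> complex) \<Rightarrow> ('a \<Rightarrow> complex) \<Rightarrow> 'a \<Rightarrow> complex" where
  "gauss_sum \<psi> \<chi> b = (\<Sum>a\<in>units. \<chi> a * \<psi> (a * b))"

lemma gauss_sum_mult_unit:
  fixes \<psi> \<chi> :: "'a::{comm_ring_1,finite} \<Rightarrow> complex"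
  assumes \<chi>: "mult_char \<chi>" and c: "c \<in> units"
  shows "gauss_sum \<psi> \<chi> (c * b) = \<chi> (unit_inv c) * gauss_sum \<psi> \<chi> b"
proof -
  have c': "unit_inv c \<in> units" by (rule unit_inv_in_units[OF c])
  have "gauss_sum \<psi> \<chi> (c * b) = (\<Sum>a\<in>units. \<chi> (unit_inv c * a) * \<psi> ((unit_inv c * a) * (c * b)))"
    unfolding gauss_sum_def by (rule sum.reindex_bij_betw[OF bij_betw_mult_units[OF c'], symmetric])
  also have "\<dots> = (\<Sum>a\<in>units. \<chi> (unit_inv c) * (\<chi> a * \<psi> (a * b)))"
  proof (rule sum.cong[OF refl])
    fix a :: 'a assume a: "a \<in> units"
    have "(unit_inv c * a) * (c * b) = (unit_inv c * c) * (a * b)" by (simp only: ac_simps)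
    then show "\<chi> (unit_inv c * a) * \<psi> ((unit_inv c * a) * (c * b)) = \<chi> (unit_inv c) * (\<chi> a * \<psi> (a * b))"
      using mult_char_mult[OF \<chi> c' a] unit_inv_left[OF c] by simp
  qed
  also have "\<dots> = \<chi> (unit_inv c) * gauss_sum \<psi> \<chi> b"
    by (simp add: gauss_sum_def sum_distrib_left)
  finally show ?thesis .
qed

lemma gauss_sum_at_zero: "gauss_sum \<psi> \<chi> 0 = \<psi> 0 * (\<Sum>a\<in>units. \<chi> a)"
  by (simp add: gauss_sum_def sum_distrib_left mult.commute)

lemma kloosterman_norm_sq:
  fixes \<psi> \<tau> :: "'a::{comm_ring_1,finite} \<Rightarrow> complex"
  assumes \<psi>: "add_char \<psi>" and \<tau>: "mult_char \<tau>"
  shows "complex_of_real ((cmod (kloosterman \<psi> \<tau> a))\<^sup>2) =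
    (\<Sum>u\<in>units. \<Sum>v\<in>units. \<tau> u * \<tau> (unit_inv v) * \<psi> (u + a * unit_inv u - (v + a * unit_inv v)))"
proof -
  have "cnj (kloosterman \<psi> \<tau> a) = (\<Sum>v\<in>units. \<tau> (unit_inv v) * \<psi> (- (v + a * unit_inv v)))"
    unfolding kloosterman_def cnj_sum
    by (rule sum.cong) (simp_all add: mult_char_cnj[OF \<tau>] add_char_cnj[OF \<psi>])
  then have "complex_of_real ((cmod (kloosterman \<psi> \<tau> a))\<^sup>2) =
    (\<Sum>u\<in>units. \<Sum>v\<in>units. \<tau> u * \<psi> (u + a * unit_inv u) * (\<tau> (unit_inv v) * \<psi> (- (v + a * unit_inv v))))"
    unfolding complex_norm_square by (simp only: kloosterman_def sum_product)
  also have "\<dots> = (\<Sum>u\<in>units. \<Sum>v\<in>units. \<tau> u * \<tau> (unit_inv v) * \<psi> (u + a * unit_inv u - (v + a * unit_inv v)))"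
    by (simp only: diff_conv_add_uminus add_char_add[OF \<psi>] ac_simps)
  finally show ?thesis .
qed

lemma kloosterman_substitution:
  fixes \<psi> \<tau> \<chi> :: "'a::comm_ring_1 \<Rightarrow> complex"
  assumes \<psi>: "add_char \<psi>" and \<tau>: "mult_char \<tau>" and \<chi>: "mult_char \<chi>"
    and v: "v \<in> units" and b: "b \<in> units" and t: "t \<in> units"
  shows "\<chi> (v * b) * (\<tau> (v * t) * \<tau> (unit_inv v) *
           \<psi> (v * t + v * b * unit_inv (v * t) - (v + v * b * unit_inv v)))
       = \<tau> t * (\<chi> v * \<psi> (v * (t - 1))) * (\<chi> b * \<psi> (b * (unit_inv t - 1)))"
proof -
  have "v * b * unit_inv (v * t) = (v * unit_inv v) * (b * unit_inv t)"
    using unit_inv_mult[OF v t] by (simp add: ac_simps)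
  moreover have "v * b * unit_inv v = (v * unit_inv v) * b" by (simp add: ac_simps)
  ultimately have "v * t + v * b * unit_inv (v * t) - (v + v * b * unit_inv v)
      = v * (t - 1) + b * (unit_inv t - 1)"
    using unit_inv_right[OF v] by (simp add: algebra_simps)
  moreover have "\<tau> (v * t) * \<tau> (unit_inv v) = \<tau> t"
    using mult_char_mult[OF \<tau> v t] mult_char_unit_inv[OF \<tau> v] by (simp add: ac_simps)
  ultimately show ?thesis
    using mult_char_mult[OF \<chi> v b] by (simp add: add_char_add[OF \<psi>] ac_simps)
qed

text \<open>After expanding \<open>|K(a)|\<^sup>2\<close> as a double sum over \<open>u, v\<close>, substitute \<open>a = v b\<close> and \<open>u = v t\<close>.\<close>
lemma sum_char_mult_kloosterman_norm_sq:
  fixes \<psi> \<tau> \<chi> :: "'a::{comm_ring_1,finite} \<Rightarrow> complex"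
  assumes \<psi>: "add_char \<psi>" and \<tau>: "mult_char \<tau>" and \<chi>: "mult_char \<chi>"
  shows "(\<Sum>a\<in>units. \<chi> a * complex_of_real ((cmod (kloosterman \<psi> \<tau> a))\<^sup>2))
       = (\<Sum>t\<in>units. \<tau> t * gauss_sum \<psi> \<chi> (t - 1) * gauss_sum \<psi> \<chi> (unit_inv t - 1))"
proof -
  define F where "F a u v = \<chi> a * (\<tau> u * \<tau> (unit_inv v) * \<psi> (u + a * unit_inv u - (v + a * unit_inv v)))"
    for a u v :: 'a
  define H where "H v b t = \<tau> t * (\<chi> v * \<psi> (v * (t - 1))) * (\<chi> b * \<psi> (b * (unit_inv t - 1)))"
    for v b t :: 'a
  have "(\<Sum>a\<in>units. \<chi> a * complex_of_real ((cmod (kloosterman \<psi> \<tau> a))\<^sup>2))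
      = (\<Sum>a\<in>units. \<Sum>u\<in>units. \<Sum>v\<in>units. F a u v)"
    by (simp only: kloosterman_norm_sq[OF \<psi> \<tau>] F_def sum_distrib_left)
  also have "\<dots> = (\<Sum>a\<in>units. \<Sum>v\<in>units. \<Sum>u\<in>units. F a u v)"
    by (rule sum.cong[OF refl], rule sum.swap)
  also have "\<dots> = (\<Sum>v\<in>units. \<Sum>a\<in>units. \<Sum>u\<in>units. F a u v)"
    by (rule sum.swap)
  also have "\<dots> = (\<Sum>v\<in>units. \<Sum>b\<in>units. \<Sum>t\<in>units. H v b t)"
  proof (rule sum.cong[OF refl])
    fix v :: 'a assume v: "v \<in> units"
    have "(\<Sum>a\<in>units. \<Sum>u\<in>units. F a u v) = (\<Sum>b\<in>units. \<Sum>u\<in>units. F (v * b) u v)"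
      by (rule sum.reindex_bij_betw[OF bij_betw_mult_units[OF v], symmetric])
    also have "\<dots> = (\<Sum>b\<in>units. \<Sum>t\<in>units. F (v * b) (v * t) v)"
      by (rule sum.cong[OF refl], rule sum.reindex_bij_betw[OF bij_betw_mult_units[OF v], symmetric])
    also have "\<dots> = (\<Sum>b\<in>units. \<Sum>t\<in>units. H v b t)"
      unfolding F_def H_def using kloosterman_substitution[OF \<psi> \<tau> \<chi> v] by simp
    finally show "(\<Sum>a\<in>units. \<Sum>u\<in>units. F a u v) = (\<Sum>b\<in>units. \<Sum>t\<in>units. H v b t)" .
  qed
  also have "\<dots> = (\<Sum>v\<in>units. \<Sum>t\<in>units. \<Sum>b\<in>units. H v b t)"
    by (rule sum.cong[OF refl], rule sum.swap)
  also have "\<dots> = (\<Sum>t\<in>units. \<Sum>v\<in>units. \<Sum>b\<in>units. H v b t)"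
    by (rule sum.swap)
  also have "\<dots> = (\<Sum>t\<in>units. \<tau> t * gauss_sum \<psi> \<chi> (t - 1) * gauss_sum \<psi> \<chi> (unit_inv t - 1))"
  proof (rule sum.cong[OF refl])
    fix t :: 'a
    have "\<tau> t * gauss_sum \<psi> \<chi> (t - 1) * gauss_sum \<psi> \<chi> (unit_inv t - 1)
        = \<tau> t * (\<Sum>v\<in>units. \<Sum>b\<in>units. \<chi> v * \<psi> (v * (t - 1)) * (\<chi> b * \<psi> (b * (unit_inv t - 1))))"
      by (simp only: gauss_sum_def sum_product mult.assoc)
    then show "(\<Sum>v\<in>units. \<Sum>b\<in>units. H v b t)
        = \<tau> t * gauss_sum \<psi> \<chi> (t - 1) * gauss_sum \<psi> \<chi> (unit_inv t - 1)"
      by (simp only: H_def sum_distrib_left mult.assoc)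
  qed
  finally show ?thesis .
qed

section \<open>Finite local rings\<close>

text \<open>The parameter \<open>R\<close> only fixes the type of ring elements.\<close>
locale finite_local_ring =
  fixes R :: "'a::{comm_ring_1,finite} itself"
  assumes local: "local_ring R"
begin

abbreviation M where "M \<equiv> (max_ideal :: 'a set)"
abbreviation U where "U \<equiv> (units :: 'a set)"

lemma maximal_max_ideal: "maximal_ideal M"
  using local unfolding local_ring_def max_ideal_def by (rule theI')

lemma maximal_ideal_eq_max_ideal: "maximal_ideal J \<Longrightarrow> J = M"
  using local unfolding local_ring_def max_ideal_def by (metis the1_equality)

lemma ring_ideal_max_ideal: "ring_ideal M"
  using maximal_max_ideal by (simp add: maximal_ideal_def)

lemma one_notin_max_ideal: "1 \<notin> M"
  using ring_ideal_mult[OF ring_ideal_max_ideal, of 1] maximal_max_ideal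
  by (auto simp: maximal_ideal_def)

lemma unit_notin_max_ideal: "u \<in> U \<Longrightarrow> u \<notin> M"
  using one_notin_max_ideal ring_ideal_mult[OF ring_ideal_max_ideal] unit_inv_left by metis

text \<open>A proper principal ideal lies in a maximal ideal, which can only be \<open>M\<close>.\<close>
lemma nonunit_in_max_ideal:
  assumes "x \<notin> U" shows "x \<in> M"
proof -
  let ?S = "{J::'a set. ring_ideal J \<and> x \<in> J \<and> J \<noteq> UNIV}"
  have "1 \<notin> range (\<lambda>r. r * x)" using assms units_iff by (metis mult.commute rangeE)
  then have "range (\<lambda>r. r * x) \<noteq> UNIV" by (metis UNIV_I)
  moreover have "x \<in> range (\<lambda>r. r * x)" by (rule range_eqI[where x=1]) simp
  ultimately have Rx: "range (\<lambda>r. r * x) \<in> ?S"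
    unfolding mem_Collect_eq using ring_ideal_principal[of x] by (intro conjI)
  obtain J where J: "J \<in> ?S" and J_max: "\<forall>J'\<in>?S. J \<subseteq> J' \<longrightarrow> J = J'"
    using finite_has_maximal2[OF finite Rx] by meson
  have "maximal_ideal J"
    unfolding maximal_ideal_def
  proof (intro conjI allI impI)
    fix J' assume "ring_ideal J' \<and> J \<subseteq> J'"
    then show "J' = J \<or> J' = UNIV" using J J_max by blast
  qed (use J in auto)
  then show ?thesis using J maximal_ideal_eq_max_ideal by blast
qed

lemma max_ideal_iff: "x \<in> M \<longleftrightarrow> x \<notin> U"
  using nonunit_in_max_ideal unit_notin_max_ideal by blast

lemma units_eq: "U = - M"
  using max_ideal_iff by blast

lemma card_units_add_card_max_ideal: "card U + card M = card (UNIV :: 'a set)"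
proof -
  have "U \<union> M = UNIV" "U \<inter> M = {}" using max_ideal_iff by blast+
  then show ?thesis using card_Un_disjoint[of U M] by simp
qed

lemma unit_add_max_ideal: "u \<in> U \<Longrightarrow> m \<in> M \<Longrightarrow> u + m \<in> U"
  by (metis add_diff_cancel_right' max_ideal_iff ring_ideal_diff ring_ideal_max_ideal)

lemma one_add_max_ideal: "m \<in> M \<Longrightarrow> 1 + m \<in> U"
  by (simp add: unit_add_max_ideal)

lemma max_ideal_prime: "x * y \<in> M \<Longrightarrow> x \<in> M \<or> y \<in> M"
  using units_mult_closed max_ideal_iff by blast

lemma minus_one_unit: "- 1 \<in> U"
  by (simp add: uminus_in_units)

lemma two_notin_max_ideal:
  assumes "odd (residue_char R)" shows "2 \<notin> M"
proof
  assume two: "2 \<in> M"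
  have "(LEAST n. n > 0 \<and> (of_nat n :: 'a) \<in> M) = 2"
  proof (rule Least_equality)
    fix n assume "0 < n \<and> (of_nat n :: 'a) \<in> M"
    then show "2 \<le> n" using one_notin_max_ideal by (cases "n = 1") auto
  qed (use two in simp)
  then show False using assms by (simp add: residue_char_def)
qed

definition socle :: "'a set" where
  "socle = {s. \<forall>m\<in>M. m * s = 0}"

lemma max_ideal_mult_socle: "m \<in> M \<Longrightarrow> s \<in> socle \<Longrightarrow> m * s = 0"
  by (simp add: socle_def)

lemma ring_ideal_socle: "ring_ideal socle"
  by (auto simp: ring_ideal_def socle_def distrib_left mult.left_commute)

lemma zero_in_socle: "0 \<in> socle"
  by (rule ring_ideal_zero[OF ring_ideal_socle])

text \<open>Among the elements of \<open>P - I\<close> take one generating a smallest principal ideal; multiplying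
  it by \<open>n \<in> M\<close> strictly shrinks that ideal, because \<open>1 - r n\<close> is a unit.\<close>
lemma exists_socle_element_mod:
  assumes I: "ring_ideal I" and P: "ring_ideal P" and "\<not> P \<subseteq> I"
  obtains x where "x \<in> P" "x \<notin> I" "\<forall>n\<in>M. n * x \<in> I"
proof -
  let ?Rx = "\<lambda>x. range (\<lambda>r. r * x)"
  obtain x where x: "x \<in> P" "x \<notin> I"
    and x_min: "\<And>y. y \<in> P \<Longrightarrow> y \<notin> I \<Longrightarrow> card (?Rx x) \<le> card (?Rx y)"
    using assms(3) ex_has_least_nat[of "\<lambda>y. y \<in> P \<and> y \<notin> I" _ "\<lambda>y. card (?Rx y)"] by blast
  have "n * x \<in> I" if n: "n \<in> M" for n
  proof (rule ccontr)
    assume nx: "n * x \<notin> I"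
    have "x \<notin> ?Rx (n * x)"
    proof
      assume "x \<in> ?Rx (n * x)"
      then obtain r where "x = r * (n * x)" by blast
      then have "(1 + - (r * n)) * x = 0" by (simp add: algebra_simps)
      moreover have "1 + - (r * n) \<in> U"
        using one_add_max_ideal ring_ideal_uminus ring_ideal_mult ring_ideal_max_ideal n by blast
      ultimately show False using units_mult_eq_0_iff ring_ideal_zero[OF I] x(2) by metis
    qed
    moreover have "x \<in> ?Rx x" "?Rx (n * x) \<subseteq> ?Rx x"
      by (auto simp: image_iff) (metis mult_1_left, metis mult.assoc)
    ultimately have "card (?Rx (n * x)) < card (?Rx x)" by (metis psubset_card_mono finite psubsetI)
    then show False using x_min[OF ring_ideal_mult[OF P x(1)] nx] by simp
  qed
  then show ?thesis using that x by blast
qed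

definition char_kernel :: "('a \<Rightarrow> complex) \<Rightarrow> 'a set" where
  "char_kernel \<chi> = {x \<in> M. \<forall>r. \<chi> (1 + r * x) = 1}"

lemma char_kernel_subset: "char_kernel \<chi> \<subseteq> M"
  by (auto simp: char_kernel_def)

lemma char_kernel_trivial: "x \<in> char_kernel \<chi> \<Longrightarrow> \<chi> (1 + x) = 1"
  unfolding char_kernel_def by (metis (mono_tags, lifting) mem_Collect_eq mult_1_left)

lemma subset_char_kernel:
  assumes "ring_ideal J" "J \<subseteq> M" "\<forall>x\<in>J. \<chi> (1 + x) = 1"
  shows "J \<subseteq> char_kernel \<chi>"
  using assms ring_ideal_mult[OF assms(1)] by (auto simp: char_kernel_def)

text \<open>\<open>1 + r (x + y) = (1 + r x) (1 + r' y)\<close> with \<open>r' = r (1 + r x)\<inverse>\<close>.\<close>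
lemma ring_ideal_char_kernel:
  assumes \<chi>: "mult_char \<chi>" shows "ring_ideal (char_kernel \<chi>)"
  unfolding ring_ideal_def
proof (intro conjI ballI allI impI)
  show "0 \<in> char_kernel \<chi>"
    using ring_ideal_zero[OF ring_ideal_max_ideal] mult_char_one[OF \<chi>] by (simp add: char_kernel_def)
next
  fix x y assume x: "x \<in> char_kernel \<chi>" and y: "y \<in> char_kernel \<chi>"
  then have xy: "x \<in> M" "y \<in> M" by (auto simp: char_kernel_def)
  have "\<chi> (1 + r * (x + y)) = 1" for r
  proof -
    define r' where "r' = unit_inv (1 + r * x) * r"
    have u: "1 + r * x \<in> U" "1 + r' * y \<in> U"
      using one_add_max_ideal ring_ideal_mult[OF ring_ideal_max_ideal] xy by blast+
    have "1 + r * (x + y) = (1 + r * x) * (1 + r' * y)"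
      using unit_inv_right[OF u(1)] unfolding r'_def
      by (simp add: algebra_simps)
    then show ?thesis
      using mult_char_mult[OF \<chi> u] x y by (simp add: char_kernel_def)
  qed
  then show "x + y \<in> char_kernel \<chi>"
    using xy ring_ideal_add[OF ring_ideal_max_ideal] by (simp add: char_kernel_def)
next
  fix r x assume "x \<in> char_kernel \<chi>"
  then show "r * x \<in> char_kernel \<chi>"
    using ring_ideal_mult[OF ring_ideal_max_ideal]
    by (auto simp: char_kernel_def) (metis mult.assoc)
qed

lemma conductor_eq_char_kernel:
  assumes \<chi>: "mult_char \<chi>" and "\<not> trivial_char \<chi>"
  shows "conductor \<chi> = char_kernel \<chi>"
proof -
  let ?P = "\<lambda>I. ring_ideal I \<and> I \<subseteq> M \<and> (\<forall>x\<in>I. \<chi> (1 + x) = 1)"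
  have "?P (char_kernel \<chi>)" "\<And>J. ?P J \<Longrightarrow> J \<subseteq> char_kernel \<chi>"
    using ring_ideal_char_kernel[OF \<chi>] char_kernel_subset char_kernel_trivial subset_char_kernel
    by blast+
  then have "(THE I. ?P I \<and> (\<forall>J. ?P J \<longrightarrow> J \<subseteq> I)) = char_kernel \<chi>"
    by (intro the_equality) (auto intro: subset_antisym)
  then show ?thesis using assms(2) by (simp add: conductor_def)
qed

definition residue_squares :: "'a set" where
  "residue_squares = {u \<in> U. \<exists>v. u - v * v \<in> M}"

lemma residue_square_root_unit:
  assumes "u \<in> U" "u - v * v \<in> M" shows "v \<in> U"
  using assms ring_ideal_add[OF ring_ideal_max_ideal, of "u - v * v" "v * v"]
    ring_ideal_mult[OF ring_ideal_max_ideal] max_ideal_iff by fastforce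

lemma card_square_roots_le:
  "card {v \<in> U. x - v * v \<in> M} \<le> 2 * card M"
proof (cases "{v \<in> U. x - v * v \<in> M} = {}")
  case False
  then obtain v0 where v0: "x - v0 * v0 \<in> M" by blast
  have "{v \<in> U. x - v * v \<in> M} \<subseteq> (\<lambda>m. v0 + m) ` M \<union> (\<lambda>m. - v0 + m) ` M"
  proof
    fix v assume "v \<in> {v \<in> U. x - v * v \<in> M}"
    then have "(x - v0 * v0) - (x - v * v) \<in> M"
      using ring_ideal_diff[OF ring_ideal_max_ideal v0] by blast
    moreover have "(x - v0 * v0) - (x - v * v) = (v - v0) * (v + v0)"
      by (simp add: algebra_simps)
    ultimately have "v - v0 \<in> M \<or> v + v0 \<in> M" using max_ideal_prime by metis
    then show "v \<in> (\<lambda>m. v0 + m) ` M \<union> (\<lambda>m. - v0 + m) ` M"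
    proof
      assume "v - v0 \<in> M"
      then show ?thesis by (intro UnI1 image_eqI[where x="v - v0"]) simp_all
    next
      assume "v + v0 \<in> M"
      then show ?thesis by (intro UnI2 image_eqI[where x="v + v0"]) simp_all
    qed
  qed
  then have "card {v \<in> U. x - v * v \<in> M} \<le> card ((\<lambda>m. v0 + m) ` M \<union> (\<lambda>m. - v0 + m) ` M)"
    by (rule card_mono[OF finite])
  also have "\<dots> \<le> card ((\<lambda>m. v0 + m) ` M) + card ((\<lambda>m. - v0 + m) ` M)"
    by (rule card_Un_le)
  also have "\<dots> \<le> card M + card M"
    by (intro add_mono card_image_le finite)
  also have "\<dots> = 2 * card M" by simp
  finally show ?thesis .
qed (simp only: card.empty zero_le)

lemma card_residue_squares_near:
  assumes "v \<in> U" shows "card {x \<in> residue_squares. x - v * v \<in> M} = card M"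
proof -
  have "{x \<in> residue_squares. x - v * v \<in> M} = (\<lambda>m. v * v + m) ` M"
  proof (intro set_eqI iffI)
    fix x assume "x \<in> {x \<in> residue_squares. x - v * v \<in> M}"
    then show "x \<in> (\<lambda>m. v * v + m) ` M" by (intro image_eqI[where x="x - v * v"]) auto
  next
    fix x assume "x \<in> (\<lambda>m. v * v + m) ` M"
    then obtain m where m: "m \<in> M" "x = v * v + m" by blast
    then have "x \<in> U" "x - v * v \<in> M"
      using unit_add_max_ideal[OF units_mult_closed[OF assms assms]] by simp_all
    then show "x \<in> {x \<in> residue_squares. x - v * v \<in> M}"
      by (auto simp: residue_squares_def)
  qed
  then show ?thesis by (simp add: card_image)
qed

text \<open>Double counting of the pairs \<open>(x, v)\<close> with \<open>x \<equiv> v\<^sup>2 mod M\<close>: each unit \<open>v\<close> contributes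
  \<open>|M|\<close> squares \<open>x\<close>, and each \<open>x\<close> has at most \<open>2 |M|\<close> square roots \<open>v\<close>.\<close>
lemma card_units_le_card_residue_squares: "card U \<le> 2 * card residue_squares"
proof -
  have "card M * card U = (\<Sum>x\<in>residue_squares. card {v \<in> U. x - v * v \<in> M})"
    by (rule sum_multicount[symmetric]) (simp_all add: card_residue_squares_near)
  also have "\<dots> \<le> card residue_squares * (2 * card M)"
    using sum_bounded_above[of residue_squares _ "2 * card M"] card_square_roots_le by simp
  also have "\<dots> = card M * (2 * card residue_squares)"
    by (simp only: mult.commute mult.left_commute)
  finally show ?thesis
    using ring_ideal_zero[OF ring_ideal_max_ideal] card_gt_0_iff[of M] by (metis finite mult_le_cancel1 empty_iff)
qed

lemma quad_char_eqI:
  assumes \<chi>: "mult_char \<chi>" and sq: "\<forall>u\<in>U. \<chi> u ^ 2 = 1"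
    and triv: "\<forall>m\<in>M. \<chi> (1 + m) = 1" and nontriv: "\<not> trivial_char \<chi>"
  shows "\<forall>u\<in>U. \<chi> u = quad_char u"
proof -
  let ?Q = residue_squares
  have \<chi>_square: "\<chi> q = 1" if Q: "q \<in> ?Q" for q
  proof -
    obtain v where q: "q \<in> U" "q - v * v \<in> M" using Q by (auto simp: residue_squares_def)
    have v: "v \<in> U" "v * v \<in> U" using residue_square_root_unit[OF q] units_mult_closed by blast+
    define w where "w = unit_inv (v * v) * (q - v * v)"
    have w: "w \<in> M" unfolding w_def using ring_ideal_mult[OF ring_ideal_max_ideal q(2)] .
    have "v * v * (1 + w) = v * v + (v * v * unit_inv (v * v)) * (q - v * v)"
      unfolding w_def by (simp only: distrib_left mult_1_right mult.assoc)
    then have "q = v * v * (1 + w)" using unit_inv_right[OF v(2)] by simp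
    then show ?thesis
      using mult_char_mult[OF \<chi>] one_add_max_ideal[OF w] v triv w sq
      by (simp add: power2_eq_square)
  qed
  obtain x0 where x0: "x0 \<in> U" "\<chi> x0 \<noteq> 1" using nontriv by (auto simp: trivial_char_def)
  then have \<chi>_x0: "\<chi> x0 = - 1" using sq by (metis power2_eq_1_iff)
  have QU: "?Q \<subseteq> U" by (auto simp: residue_squares_def)
  have \<chi>_x0_square: "\<chi> (x0 * q) = - 1" if "q \<in> ?Q" for q
    using mult_char_mult[OF \<chi> x0(1)] \<chi>_x0 \<chi>_square that QU by auto
  have img: "(\<lambda>q. x0 * q) ` ?Q \<subseteq> U - ?Q"
    using \<chi>_x0_square \<chi>_square units_mult_closed[OF x0(1)] QU by fastforce
  have inj: "inj_on (\<lambda>q. x0 * q) ?Q"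
    using units_mult_left_cancel[OF x0(1)] by (auto intro: inj_onI)
  have "card (U - ?Q) \<le> card ((\<lambda>q. x0 * q) ` ?Q)"
    using card_units_le_card_residue_squares card_Diff_subset[OF _ QU] card_image[OF inj] by simp
  then have non_squares: "U - ?Q = (\<lambda>q. x0 * q) ` ?Q"
    using card_seteq[OF _ img] by simp
  show ?thesis
  proof
    fix u assume u: "u \<in> U"
    show "\<chi> u = quad_char u"
    proof (cases "u \<in> ?Q")
      case True
      then show ?thesis using \<chi>_square by (simp add: quad_char_def residue_squares_def)
    next
      case False
      then obtain q where "q \<in> ?Q" "u = x0 * q" using u non_squares by blast
      then show ?thesis
        using False u \<chi>_x0_square by (auto simp: quad_char_def residue_squares_def)
    qed
  qed
qed

text \<open>Since \<open>2\<close> is a unit, \<open>h \<mapsto> 2 h + h\<^sup>2\<close> is injective, hence bijective, on \<open>J\<close>.\<close>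
lemma one_add_ideal_square:
  assumes two: "2 \<notin> M" and J: "ring_ideal J" "J \<subseteq> M" and j: "j \<in> J"
  obtains h where "h \<in> J" "1 + j = (1 + h) * (1 + h)"
proof -
  define s where "s h = 2 * h + h * h" for h :: 'a
  have "s ` J \<subseteq> J"
    unfolding s_def using ring_ideal_add[OF J(1)] ring_ideal_mult[OF J(1)] by blast
  moreover have "inj_on s J"
  proof (rule inj_onI)
    fix h h' assume h: "h \<in> J" "h' \<in> J" and "s h = s h'"
    then have "(2 + (h + h')) * (h - h') = 0" unfolding s_def by (simp add: algebra_simps)
    moreover have "2 + (h + h') \<in> U"
      using two h J max_ideal_iff ring_ideal_add[OF ring_ideal_max_ideal]
        ring_ideal_diff[OF ring_ideal_max_ideal] by (metis add_diff_cancel_right' subsetD)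
    ultimately show "h = h'" using units_mult_eq_0_iff by (metis eq_iff_diff_eq_0)
  qed
  ultimately have "s ` J = J" by (rule endo_inj_surj[OF finite])
  then obtain h where "h \<in> J" "j = s h" using j by (metis imageE)
  moreover have "1 + s h = (1 + h) * (1 + h)" by (simp add: s_def algebra_simps)
  ultimately show ?thesis using that by simp
qed

lemma ring_ideal_max_ideal_quotient:
  assumes I: "ring_ideal I" shows "ring_ideal {h \<in> M. \<forall>n\<in>M. n * h \<in> I}"
  using ring_ideal_add[OF I] ring_ideal_mult[OF I] ring_ideal_zero[OF I]
    ring_ideal_add[OF ring_ideal_max_ideal] ring_ideal_mult[OF ring_ideal_max_ideal]
    ring_ideal_zero[OF ring_ideal_max_ideal]
  unfolding ring_ideal_def by (simp add: distrib_left mult.left_commute)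

text \<open>Take \<open>h\<close> in the ideal \<open>J = (I : M)\<close>, \<open>I\<close> the kernel of \<open>\<chi>\<close>: \<open>\<chi>\<close> is nontrivial on \<open>1 + J\<close>
  because \<open>J \<noteq> I\<close>, and every element of \<open>1 + J\<close> is a square in \<open>1 + J\<close>.\<close>
lemma exists_char_square_ne_one:
  assumes \<chi>: "mult_char \<chi>" and two: "2 \<notin> M" and nontriv: "\<not> (\<forall>j\<in>M. \<chi> (1 + j) = 1)"
  obtains h where "h \<in> M" "\<forall>n\<in>M. n * h \<in> char_kernel \<chi>" "\<chi> (1 + h) ^ 2 \<noteq> 1"
proof -
  let ?I = "char_kernel \<chi>"
  define J where "J = {h \<in> M. \<forall>n\<in>M. n * h \<in> ?I}"
  have I: "ring_ideal ?I" by (rule ring_ideal_char_kernel[OF \<chi>])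
  have J: "ring_ideal J" "J \<subseteq> M"
    unfolding J_def using ring_ideal_max_ideal_quotient[OF I] by auto
  have "\<not> M \<subseteq> ?I" using nontriv char_kernel_trivial by blast
  then obtain x where "x \<in> M" "x \<notin> ?I" "\<forall>n\<in>M. n * x \<in> ?I"
    by (rule exists_socle_element_mod[OF I ring_ideal_max_ideal])
  then have "\<not> J \<subseteq> ?I" by (auto simp: J_def)
  then obtain j where j: "j \<in> J" "\<chi> (1 + j) \<noteq> 1"
    using subset_char_kernel[OF J] by blast
  obtain h where h: "h \<in> J" "1 + j = (1 + h) * (1 + h)"
    by (rule one_add_ideal_square[OF two J j(1)])
  have "\<chi> (1 + h) ^ 2 \<noteq> 1"
    using h j(2) mult_char_mult[OF \<chi>] one_add_max_ideal J(2) by (auto simp: power2_eq_square)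
  then show ?thesis using that h(1) by (auto simp: J_def)
qed

end

section \<open>The socle and Gauss sums\<close>

locale frobenius_local_ring = finite_local_ring R for R :: "'a::{comm_ring_1,finite} itself" +
  fixes \<psi> :: "'a \<Rightarrow> complex"
  assumes not_field: "\<not> is_field_ring R"
    and primitive: "primitive_add_char \<psi>"
begin

lemma add_char_psi: "add_char \<psi>"
  using primitive by (simp add: primitive_add_char_def)

lemma psi_nontrivial_on_ideal: "ring_ideal J \<Longrightarrow> J \<noteq> {0} \<Longrightarrow> \<exists>s\<in>J. \<psi> s \<noteq> 1"
  using primitive unfolding primitive_add_char_def by blast

lemma max_ideal_ne_zero: "M \<noteq> {0}"
proof
  assume "M = {0}"
  then have "\<forall>x::'a. x \<noteq> 0 \<longrightarrow> x dvd 1" using max_ideal_iff by (auto simp: units_def)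
  then show False
    using not_field one_notin_max_ideal ring_ideal_zero[OF ring_ideal_max_ideal]
    by (auto simp: is_field_ring_def)
qed

lemma socle_subset_max_ideal: "socle \<subseteq> M"
proof
  fix s assume "s \<in> socle"
  moreover obtain x where "x \<in> M" "x \<noteq> 0"
    using max_ideal_ne_zero ring_ideal_zero[OF ring_ideal_max_ideal] by blast
  ultimately show "s \<in> M"
    using max_ideal_iff units_mult_eq_0_iff by (metis max_ideal_mult_socle mult.commute)
qed

lemma socle_ne_zero: "socle \<noteq> {0}"
proof -
  have "\<not> UNIV \<subseteq> {0::'a}" using one_notin_max_ideal ring_ideal_zero[OF ring_ideal_max_ideal] by (metis UNIV_I singletonD subsetD)
  then obtain z :: 'a where "z \<noteq> 0" "\<forall>n\<in>M. n * z = 0"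
    using exists_socle_element_mod[OF ring_ideal_zero_set ring_ideal_UNIV] by auto
  then show ?thesis by (auto simp: socle_def)
qed

lemma annihilator_socle_element:
  assumes "z \<in> socle" "z \<noteq> 0" shows "{r. r * z = 0} = M"
  using assms max_ideal_mult_socle max_ideal_iff units_mult_eq_0_iff by blast

lemma socle_eq_principal:
  assumes z: "z \<in> socle" "z \<noteq> 0" shows "socle = range (\<lambda>r. r * z)"
proof -
  have sub: "range (\<lambda>r. r * z) \<subseteq> socle" using ring_ideal_mult[OF ring_ideal_socle z(1)] by auto
  have "M \<subseteq> {r. \<forall>s\<in>socle. \<psi> (r * s) = 1}"
    using max_ideal_mult_socle add_char_zero[OF add_char_psi] by auto
  then have "card socle * card M \<le> card socle * card {r. \<forall>s\<in>socle. \<psi> (r * s) = 1}"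
    by (intro mult_le_mono2 card_mono[OF finite])
  also have "\<dots> = card (UNIV :: 'a set)"
    by (rule card_ideal_mult_card_char_annihilator[OF primitive ring_ideal_socle])
  also have "\<dots> = card (range (\<lambda>r. r * z)) * card M"
    using card_range_mult_card_annihilator[of z] annihilator_socle_element[OF z] by simp
  finally have "card socle \<le> card (range (\<lambda>r. r * z))"
    using ring_ideal_zero[OF ring_ideal_max_ideal] by (metis card_gt_0_iff empty_iff finite mult_le_cancel2)
  then show ?thesis using card_seteq[OF _ sub] by simp
qed

lemma card_socle: "card socle * card M = card (UNIV :: 'a set)"
proof -
  obtain z where z: "z \<in> socle" "z \<noteq> 0" using socle_ne_zero zero_in_socle by blast
  show ?thesis
    using card_range_mult_card_annihilator[of z]
    unfolding socle_eq_principal[OF z, symmetric] annihilator_socle_element[OF z] .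
qed

lemma socle_subset_ideal:
  assumes I: "ring_ideal I" "I \<noteq> {0}" shows "socle \<subseteq> I"
proof -
  have "\<not> I \<subseteq> {0}" using I ring_ideal_zero by blast
  then obtain z where z: "z \<in> I" "z \<noteq> 0" "\<forall>n\<in>M. n * z = 0"
    using exists_socle_element_mod[OF ring_ideal_zero_set I(1)] by auto
  then show ?thesis
    using socle_eq_principal[of z] ring_ideal_mult[OF I(1)] by (auto simp: socle_def)
qed

lemma sum_units_add_char_socle:
  assumes s: "s \<in> socle" "s \<noteq> 0"
  shows "(\<Sum>a\<in>U. \<psi> (a * s)) = - of_nat (card M)"
proof -
  have "(\<Sum>a\<in>UNIV. \<psi> (a * s)) = (\<Sum>a\<in>U. \<psi> (a * s)) + (\<Sum>a\<in>M. \<psi> (a * s))"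
    using units_eq sum.subset_diff[of M UNIV] by (simp add: Compl_eq_Diff_UNIV)
  moreover have "(\<Sum>a\<in>M. \<psi> (a * s)) = of_nat (card M)"
    using max_ideal_mult_socle[OF _ s(1)] add_char_zero[OF add_char_psi] by simp
  ultimately show ?thesis
    using primitive_add_char_sum_mult[OF primitive s(2)] by (simp add: eq_neg_iff_add_eq_0)
qed

lemma nonprimitive_char_trivial_on_socle:
  assumes \<chi>: "mult_char \<chi>" "\<not> primitive_mult_char \<chi>" and s: "s \<in> socle"
  shows "\<chi> (1 + s) = 1"
proof (cases "trivial_char \<chi>")
  case True
  then show ?thesis
    using one_add_max_ideal socle_subset_max_ideal s by (auto simp: trivial_char_def)
next
  case False
  then have "char_kernel \<chi> \<noteq> {0}"
    using conductor_eq_char_kernel \<chi> by (simp add: primitive_mult_char_def)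
  then have "socle \<subseteq> char_kernel \<chi>"
    using socle_subset_ideal ring_ideal_char_kernel[OF \<chi>(1)] by blast
  then show ?thesis using s char_kernel_trivial by blast
qed

lemma nonprimitive_char_add_socle:
  assumes \<chi>: "mult_char \<chi>" "\<not> primitive_mult_char \<chi>" and u: "u \<in> U" and s: "s \<in> socle"
  shows "\<chi> (u + s) = \<chi> u"
proof -
  have s': "unit_inv u * s \<in> socle" by (rule ring_ideal_mult[OF ring_ideal_socle s])
  have "u * (1 + unit_inv u * s) = u + (u * unit_inv u) * s"
    by (simp only: distrib_left mult_1_right mult.assoc)
  then have "u + s = u * (1 + unit_inv u * s)" using unit_inv_right[OF u] by simp
  then show ?thesis
    using mult_char_mult[OF \<chi>(1) u one_add_max_ideal] socle_subset_max_ideal s'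
      nonprimitive_char_trivial_on_socle[OF \<chi> s'] by auto
qed

lemma gauss_sum_eq_0_if_shift:
  assumes \<chi>: "mult_char \<chi>" and J: "ring_ideal J" "J \<subseteq> M" and triv: "\<forall>j\<in>J. \<chi> (1 + j) = 1"
    and j0: "j0 \<in> J" "\<psi> (j0 * b) \<noteq> 1"
  shows "gauss_sum \<psi> \<chi> b = 0"
proof -
  have j0M: "j0 \<in> M" using j0(1) J(2) by blast
  have "a - j0 \<in> U" if "a \<in> U" for a
    using unit_add_max_ideal[OF that ring_ideal_uminus[OF ring_ideal_max_ideal j0M]] by simp
  then have "bij_betw (\<lambda>a. a + j0) U U"
    using unit_add_max_ideal[OF _ j0M] by (intro bij_betw_byWitness[where f'="\<lambda>a. a - j0"]) auto
  then have "gauss_sum \<psi> \<chi> b = (\<Sum>a\<in>U. \<chi> (a + j0) * \<psi> ((a + j0) * b))"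
    unfolding gauss_sum_def by (rule sum.reindex_bij_betw[symmetric])
  also have "\<dots> = (\<Sum>a\<in>U. \<psi> (j0 * b) * (\<chi> a * \<psi> (a * b)))"
  proof (rule sum.cong[OF refl])
    fix a assume a: "a \<in> U"
    have j: "unit_inv a * j0 \<in> J" by (rule ring_ideal_mult[OF J(1) j0(1)])
    then have u: "1 + unit_inv a * j0 \<in> U" using one_add_max_ideal J(2) by blast
    have "a * (1 + unit_inv a * j0) = a + (a * unit_inv a) * j0"
      by (simp only: distrib_left mult_1_right mult.assoc)
    then have "a + j0 = a * (1 + unit_inv a * j0)" using unit_inv_right[OF a] by simp
    then have "\<chi> (a + j0) = \<chi> a" using mult_char_mult[OF \<chi> a u] triv j by simp
    then show "\<chi> (a + j0) * \<psi> ((a + j0) * b) = \<psi> (j0 * b) * (\<chi> a * \<psi> (a * b))"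
      by (simp add: distrib_right add_char_add[OF add_char_psi])
  qed
  also have "\<dots> = \<psi> (j0 * b) * gauss_sum \<psi> \<chi> b"
    by (simp add: gauss_sum_def sum_distrib_left)
  finally show ?thesis using j0(2) by (metis mult_cancel_right1)
qed

lemma gauss_sum_nonzero_annihilated:
  assumes "mult_char \<chi>" "ring_ideal J" "J \<subseteq> M" "\<forall>j\<in>J. \<chi> (1 + j) = 1"
    and "gauss_sum \<psi> \<chi> m \<noteq> 0"
  shows "\<forall>j\<in>J. j * m = 0"
proof -
  have "\<forall>y\<in>(\<lambda>j. j * m) ` J. \<psi> y = 1" using gauss_sum_eq_0_if_shift assms by blast
  then have "(\<lambda>j. j * m) ` J = {0}"
    using primitive ring_ideal_image_mult[OF assms(2)] unfolding primitive_add_char_def by blast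
  then show ?thesis by blast
qed

lemma gauss_sum_nonzero_in_socle:
  assumes "mult_char \<chi>" "\<forall>j\<in>M. \<chi> (1 + j) = 1" "gauss_sum \<psi> \<chi> m \<noteq> 0"
  shows "m \<in> socle"
  using gauss_sum_nonzero_annihilated[OF assms(1) ring_ideal_max_ideal subset_refl assms(2,3)]
  by (simp add: socle_def)

lemma gauss_sum_unit:
  assumes \<chi>: "mult_char \<chi>" "\<not> primitive_mult_char \<chi>" and c: "c \<in> U"
  shows "gauss_sum \<psi> \<chi> c = 0"
proof -
  obtain s where s: "s \<in> socle" "\<psi> s \<noteq> 1"
    using psi_nontrivial_on_ideal[OF ring_ideal_socle socle_ne_zero] by blast
  have "gauss_sum \<psi> \<chi> 1 = 0"
    using s nonprimitive_char_trivial_on_socle[OF \<chi>]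
    by (intro gauss_sum_eq_0_if_shift[OF \<chi>(1) ring_ideal_socle socle_subset_max_ideal, of s]) auto
  then show ?thesis using gauss_sum_mult_unit[OF \<chi>(1) c, where b=1] by simp
qed

lemma sum_units_add_char_socle_mult:
  assumes m: "m \<in> socle" "m \<noteq> 0"
  shows "(\<Sum>a\<in>U. \<psi> (a * (x * m))) = (if x \<in> M then of_nat (card (UNIV :: 'a set)) else 0) - of_nat (card M)"
proof (cases "x \<in> M")
  case True
  then have "(\<Sum>a\<in>U. \<psi> (a * (x * m))) = of_nat (card U)"
    using max_ideal_mult_socle[OF _ m(1)] add_char_zero[OF add_char_psi] by simp
  then show ?thesis
    using True card_units_add_card_max_ideal[symmetric] by simp
next
  case False
  then have "x * m \<in> socle" "x * m \<noteq> 0"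
    using ring_ideal_mult[OF ring_ideal_socle m(1)] units_mult_eq_0_iff m(2) max_ideal_iff by auto
  then show ?thesis using False sum_units_add_char_socle by simp
qed

lemma gauss_sum_trivial_char_socle:
  assumes "trivial_char \<chi>" "m \<in> socle" "m \<noteq> 0"
  shows "gauss_sum \<psi> \<chi> m = - of_nat (card M)"
  using assms sum_units_add_char_socle by (simp add: gauss_sum_def trivial_char_def)

lemma sum_char_minus_one_coset:
  assumes \<chi>: "mult_char \<chi>" and triv: "\<forall>j\<in>M. \<chi> (1 + j) = 1"
  shows "(\<Sum>t\<in>{t\<in>U. 1 + t \<in> M}. \<chi> t) = of_nat (card M) * \<chi> (- 1)"
proof -
  have "bij_betw (\<lambda>j. - 1 + j) M {t\<in>U. 1 + t \<in> M}"
    using unit_add_max_ideal[OF minus_one_unit]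
    by (intro bij_betw_byWitness[where f'="\<lambda>t. 1 + t"]) auto
  then have "(\<Sum>t\<in>{t\<in>U. 1 + t \<in> M}. \<chi> t) = (\<Sum>j\<in>M. \<chi> (- 1 + j))"
    by (rule sum.reindex_bij_betw[symmetric])
  also have "\<dots> = (\<Sum>j\<in>M. \<chi> (- 1))"
  proof (rule sum.cong[OF refl])
    fix j assume "j \<in> M"
    then have j: "- j \<in> M" by (rule ring_ideal_uminus[OF ring_ideal_max_ideal])
    have "\<chi> (- 1 + j) = \<chi> (- 1) * \<chi> (1 + - j)"
      using mult_char_mult[OF \<chi> minus_one_unit one_add_max_ideal[OF j]] by simp
    then show "\<chi> (- 1 + j) = \<chi> (- 1)" using triv j by (metis mult_1_right)
  qed
  finally show ?thesis by simp
qed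

text \<open>Substituting \<open>b = a t\<close> in \<open>G(m)\<^sup>2 = \<Sum>\<^sub>a \<Sum>\<^sub>b \<chi>(a b) \<psi>((a + b) m)\<close> uses \<open>\<chi>(a)\<^sup>2 = 1\<close>
  and leaves \<open>\<Sum>\<^sub>t \<chi>(t) \<Sum>\<^sub>a \<psi>(a (1 + t) m)\<close>.\<close>
lemma gauss_sum_square_socle:
  assumes \<chi>: "mult_char \<chi>" and sq: "\<forall>u\<in>U. \<chi> u ^ 2 = 1" and triv: "\<forall>j\<in>M. \<chi> (1 + j) = 1"
    and nontriv: "\<not> trivial_char \<chi>" and m: "m \<in> socle" "m \<noteq> 0"
  shows "gauss_sum \<psi> \<chi> m ^ 2 = \<chi> (- 1) * of_nat (card M) * of_nat (card (UNIV :: 'a set))"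
proof -
  let ?W = "\<lambda>t. (if 1 + t \<in> M then of_nat (card (UNIV :: 'a set)) else 0) - of_nat (card M)"
  have "gauss_sum \<psi> \<chi> m ^ 2 = (\<Sum>a\<in>U. \<Sum>b\<in>U. \<chi> a * \<psi> (a * m) * (\<chi> b * \<psi> (b * m)))"
    unfolding power2_eq_square gauss_sum_def by (rule sum_product)
  also have "\<dots> = (\<Sum>a\<in>U. \<Sum>t\<in>U. \<chi> t * \<psi> (a * ((1 + t) * m)))"
  proof (rule sum.cong[OF refl])
    fix a assume a: "a \<in> U"
    have "(\<Sum>b\<in>U. \<chi> a * \<psi> (a * m) * (\<chi> b * \<psi> (b * m)))
        = (\<Sum>t\<in>U. \<chi> a * \<psi> (a * m) * (\<chi> (a * t) * \<psi> ((a * t) * m)))"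
      by (rule sum.reindex_bij_betw[OF bij_betw_mult_units[OF a], symmetric])
    also have "\<dots> = (\<Sum>t\<in>U. \<chi> t * \<psi> (a * ((1 + t) * m)))"
    proof (rule sum.cong[OF refl])
      fix t assume t: "t \<in> U"
      have "\<chi> a * \<chi> (a * t) = \<chi> t"
        using mult_char_mult[OF \<chi> a t] sq a by (simp add: power2_eq_square mult.assoc[symmetric])
      moreover have "\<psi> (a * m) * \<psi> ((a * t) * m) = \<psi> (a * ((1 + t) * m))"
        by (simp add: add_char_add[OF add_char_psi, symmetric] algebra_simps)
      ultimately show "\<chi> a * \<psi> (a * m) * (\<chi> (a * t) * \<psi> ((a * t) * m)) = \<chi> t * \<psi> (a * ((1 + t) * m))"
        by (metis mult.assoc mult.left_commute)
    qed
    finally show "(\<Sum>b\<in>U. \<chi> a * \<psi> (a * m) * (\<chi> b * \<psi> (b * m))) = (\<Sum>t\<in>U. \<chi> t * \<psi> (a * ((1 + t) * m)))" .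
  qed
  also have "\<dots> = (\<Sum>t\<in>U. \<chi> t * ?W t)"
    by (subst sum.swap) (simp add: sum_distrib_left[symmetric] sum_units_add_char_socle_mult[OF m])
  also have "\<dots> = of_nat (card (UNIV :: 'a set)) * (\<Sum>t\<in>{t\<in>U. 1 + t \<in> M}. \<chi> t)
                   - of_nat (card M) * (\<Sum>t\<in>U. \<chi> t)"
  proof -
    have "(\<Sum>t\<in>U. \<chi> t * ?W t) = (\<Sum>t\<in>U. of_nat (card (UNIV :: 'a set)) * (if 1 + t \<in> M then \<chi> t else 0)
                                 - of_nat (card M) * \<chi> t)"
      by (intro sum.cong) (auto simp: algebra_simps)
    then show ?thesis by (simp add: sum_subtractf sum_distrib_left sum.inter_filter)
  qed
  also have "\<dots> = \<chi> (- 1) * of_nat (card M) * of_nat (card (UNIV :: 'a set))"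
    using sum_char_minus_one_coset[OF \<chi> triv] mult_char_sum_units[OF \<chi> nontriv finite] by simp
  finally show ?thesis .
qed

end

section \<open>The reduced sum\<close>

locale kloosterman_setting = frobenius_local_ring R \<psi> for R :: "'a::{comm_ring_1,finite} itself" and \<psi> +
  fixes \<tau> \<chi> :: "'a \<Rightarrow> complex"
  assumes \<tau>: "mult_char \<tau>" "\<not> primitive_mult_char \<tau>"
    and \<chi>: "mult_char \<chi>" "\<not> primitive_mult_char \<chi>"
begin

abbreviation G where "G \<equiv> gauss_sum \<psi> \<chi>"

definition reduced_sum :: complex where
  "reduced_sum = (\<Sum>m\<in>M. \<tau> (1 + m) * \<chi> (1 + m) * G m ^ 2)"

text \<open>Only \<open>t \<in> 1 + M\<close> contribute, since \<open>G\<close> vanishes on units; for \<open>t = 1 + m\<close> one has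
  \<open>t\<inverse> - 1 = - t\<inverse> m\<close>, so \<open>G(t\<inverse> - 1) = \<chi>(- t) G(m)\<close>.\<close>
lemma sum_gauss_products_eq_reduced_sum:
  "(\<Sum>t\<in>U. \<tau> t * G (t - 1) * G (unit_inv t - 1)) = \<chi> (- 1) * reduced_sum"
proof -
  let ?f = "\<lambda>t. \<tau> t * G (t - 1) * G (unit_inv t - 1)"
  have "(\<Sum>t\<in>U. ?f t) = (\<Sum>t\<in>{t\<in>U. t - 1 \<in> M}. ?f t)"
    using gauss_sum_unit[OF \<chi>] max_ideal_iff by (intro sum.mono_neutral_right) auto
  also have "\<dots> = (\<Sum>m\<in>M. ?f (1 + m))"
    using one_add_max_ideal
    by (intro sum.reindex_bij_betw[symmetric] bij_betw_byWitness[where f'="\<lambda>t. t - 1"]) auto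
  also have "\<dots> = (\<Sum>m\<in>M. \<chi> (- 1) * (\<tau> (1 + m) * \<chi> (1 + m) * G m ^ 2))"
  proof (rule sum.cong[OF refl])
    fix m assume m: "m \<in> M"
    have u: "1 + m \<in> U" "- unit_inv (1 + m) \<in> U"
      using one_add_max_ideal[OF m] uminus_in_units unit_inv_in_units by blast+
    have "unit_inv (1 + m) - 1 = - unit_inv (1 + m) * m"
      using unit_inv_left[OF u(1)] by (simp add: algebra_simps)
    moreover have "unit_inv (- unit_inv (1 + m)) = (- 1) * (1 + m)"
      using unit_inv_uminus[OF unit_inv_in_units[OF u(1)]] unit_inv_unit_inv[OF u(1)] by simp
    ultimately have "G (unit_inv (1 + m) - 1) = \<chi> (- 1) * \<chi> (1 + m) * G m"
      using gauss_sum_mult_unit[OF \<chi>(1) u(2)] mult_char_mult[OF \<chi>(1) minus_one_unit u(1)] by simp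
    then show "?f (1 + m) = \<chi> (- 1) * (\<tau> (1 + m) * \<chi> (1 + m) * G m ^ 2)"
      by (simp add: power2_eq_square ac_simps)
  qed
  finally show ?thesis by (simp add: reduced_sum_def sum_distrib_left)
qed

lemma reduced_sum_socle:
  assumes triv: "\<forall>j\<in>M. \<chi> (1 + j) = 1"
  shows "reduced_sum = (\<Sum>m\<in>socle. G m ^ 2)"
  unfolding reduced_sum_def
proof (rule sum.mono_neutral_cong_right)
  show "\<forall>m\<in>M - socle. \<tau> (1 + m) * \<chi> (1 + m) * G m ^ 2 = 0"
    using gauss_sum_nonzero_in_socle[OF \<chi>(1) triv] by auto
  show "\<tau> (1 + m) * \<chi> (1 + m) * G m ^ 2 = G m ^ 2" if "m \<in> socle" for m
    using nonprimitive_char_trivial_on_socle[OF \<tau> that] nonprimitive_char_trivial_on_socle[OF \<chi> that]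
    by simp
qed (simp_all add: socle_subset_max_ideal)

lemma card_socle_nonzero: "card (socle - {0}) * card M = card U"
  using card_socle card_units_add_card_max_ideal zero_in_socle
  by (simp add: card_Diff_singleton diff_mult_distrib)

lemma sum_socle_nonzero_const: "(\<Sum>m\<in>socle. f m) = f 0 + of_nat (card (socle - {0})) * c"
  if "\<forall>m\<in>socle - {0}. f m = c" for f :: "'a \<Rightarrow> complex" and c
  using that sum.remove[OF finite zero_in_socle, of f] by simp

lemma reduced_sum_trivial_char:
  assumes "trivial_char \<chi>" shows "\<chi> (- 1) * reduced_sum = of_nat (card U * card (UNIV :: 'a set))"
proof -
  have triv: "\<forall>j\<in>M. \<chi> (1 + j) = 1" and "\<chi> (- 1) = 1"
    using assms one_add_max_ideal minus_one_unit by (auto simp: trivial_char_def)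
  moreover have "G 0 = of_nat (card U)"
    using assms by (simp add: gauss_sum_def trivial_char_def add_char_zero[OF add_char_psi])
  ultimately have "\<chi> (- 1) * reduced_sum = of_nat (card U ^ 2 + card (socle - {0}) * card M ^ 2)"
    using sum_socle_nonzero_const[of "\<lambda>m. G m ^ 2" "of_nat (card M) ^ 2"]
      gauss_sum_trivial_char_socle[OF assms] reduced_sum_socle by simp
  also have "card U ^ 2 + card (socle - {0}) * card M ^ 2 = card U * card (UNIV :: 'a set)"
  proof -
    have "card (socle - {0}) * card M ^ 2 = card U * card M"
      using card_socle_nonzero by (simp add: power2_eq_square mult.assoc[symmetric])
    then show ?thesis
      using card_units_add_card_max_ideal[symmetric] by (simp add: power2_eq_square algebra_simps)
  qed
  finally show ?thesis .
qed

lemma reduced_sum_quad_char: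
  assumes nontriv: "\<not> trivial_char \<chi>" and quad: "\<forall>u\<in>U. \<chi> u = quad_char u"
  shows "\<chi> (- 1) * reduced_sum = of_nat (card U * card (UNIV :: 'a set))"
proof -
  have sq: "\<forall>u\<in>U. \<chi> u ^ 2 = 1" using quad by (simp add: quad_char_def)
  have triv: "\<forall>j\<in>M. \<chi> (1 + j) = 1"
  proof
    fix j assume j: "j \<in> M"
    then have "\<exists>v. (1 + j) - v * v \<in> M" by (intro exI[where x=1]) simp
    then show "\<chi> (1 + j) = 1"
      using quad one_add_max_ideal[OF j] by (simp add: quad_char_def)
  qed
  have "G 0 = 0"
    using mult_char_sum_units[OF \<chi>(1) nontriv finite] by (simp add: gauss_sum_at_zero)
  then have "reduced_sum = of_nat (card (socle - {0})) * (\<chi> (- 1) * of_nat (card M) * of_nat (card (UNIV :: 'a set)))"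
    using sum_socle_nonzero_const[of "\<lambda>m. G m ^ 2" "\<chi> (- 1) * of_nat (card M) * of_nat (card (UNIV :: 'a set))"]
      gauss_sum_square_socle[OF \<chi>(1) sq triv nontriv] reduced_sum_socle[OF triv]
    by simp
  then have "\<chi> (- 1) * reduced_sum
      = (\<chi> (- 1) * \<chi> (- 1)) * (of_nat (card (socle - {0}) * card M) * of_nat (card (UNIV :: 'a set)))"
    by (simp only: of_nat_mult ac_simps)
  also have "\<chi> (- 1) * \<chi> (- 1) = 1" using sq minus_one_unit by (simp add: power2_eq_square)
  finally show ?thesis using card_socle_nonzero by simp
qed

text \<open>Replacing \<open>m\<close> by \<open>c m\<close> multiplies the summands of the reduced sum by \<open>\<chi>(c)\<^sup>-\<^sup>2 \<noteq> 1\<close>.\<close>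
lemma reduced_sum_eq_0_if_scaling:
  assumes c: "c \<in> U" "\<chi> c ^ 2 \<noteq> 1"
    and inv: "\<forall>m\<in>M. G m \<noteq> 0 \<longrightarrow> \<tau> (1 + c * m) * \<chi> (1 + c * m) = \<tau> (1 + m) * \<chi> (1 + m)"
  shows "reduced_sum = 0"
proof -
  let ?f = "\<lambda>m. \<tau> (1 + m) * \<chi> (1 + m) * G m ^ 2"
  have scale: "?f (c * m) = \<chi> (unit_inv c) ^ 2 * ?f m" if m: "m \<in> M" for m
  proof (cases "G m = 0")
    case True
    then show ?thesis using gauss_sum_mult_unit[OF \<chi>(1) c(1), of \<psi> m] by simp
  next
    case False
    then have "\<tau> (1 + c * m) * \<chi> (1 + c * m) = \<tau> (1 + m) * \<chi> (1 + m)" using inv m by blast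
    then show ?thesis
      unfolding gauss_sum_mult_unit[OF \<chi>(1) c(1), of \<psi> m] by (simp only: power_mult_distrib ac_simps)
  qed
  have "bij_betw (\<lambda>m. c * m) M M"
    using ring_ideal_mult[OF ring_ideal_max_ideal] unit_inv_left[OF c(1)] unit_inv_right[OF c(1)]
    by (intro bij_betw_byWitness[where f'="\<lambda>m. unit_inv c * m"]) (auto simp: mult.assoc[symmetric])
  then have "reduced_sum = (\<Sum>m\<in>M. ?f (c * m))"
    unfolding reduced_sum_def by (rule sum.reindex_bij_betw[symmetric])
  also have "\<dots> = \<chi> (unit_inv c) ^ 2 * reduced_sum"
    using scale by (simp add: reduced_sum_def sum_distrib_left)
  finally have "(1 - \<chi> (unit_inv c) ^ 2) * reduced_sum = 0" by (simp add: algebra_simps)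
  moreover have "\<chi> (unit_inv c) ^ 2 \<noteq> 1"
    using c(2) mult_char_unit_inv[OF \<chi>(1) c(1)] by (metis mult_1_left power_mult_distrib power_one)
  ultimately show ?thesis by simp
qed

lemma exists_scaling_unit:
  assumes two: "2 \<notin> M" and nontriv: "\<not> trivial_char \<chi>" and not_quad: "\<not> (\<forall>u\<in>U. \<chi> u = quad_char u)"
  obtains c where "c \<in> U" "\<chi> c ^ 2 \<noteq> 1"
    "\<forall>m\<in>M. G m \<noteq> 0 \<longrightarrow> \<tau> (1 + c * m) * \<chi> (1 + c * m) = \<tau> (1 + m) * \<chi> (1 + m)"
proof (cases "\<forall>j\<in>M. \<chi> (1 + j) = 1")
  case True
  then obtain c where c: "c \<in> U" "\<chi> c ^ 2 \<noteq> 1"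
    using quad_char_eqI[OF \<chi>(1) _ True nontriv] not_quad by blast
  have "\<tau> (1 + c * m) * \<chi> (1 + c * m) = \<tau> (1 + m) * \<chi> (1 + m)" if "m \<in> M" "G m \<noteq> 0" for m
  proof -
    have "m \<in> socle" by (rule gauss_sum_nonzero_in_socle[OF \<chi>(1) True that(2)])
    moreover have "c * m \<in> socle" by (rule ring_ideal_mult[OF ring_ideal_socle calculation])
    ultimately show ?thesis
      using nonprimitive_char_trivial_on_socle[OF \<tau>] nonprimitive_char_trivial_on_socle[OF \<chi>] by simp
  qed
  then show ?thesis using that c by blast
next
  case False
  then obtain h where h: "h \<in> M" "\<forall>n\<in>M. n * h \<in> char_kernel \<chi>" "\<chi> (1 + h) ^ 2 \<noteq> 1"
    by (rule exists_char_square_ne_one[OF \<chi>(1) two])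
  have "\<tau> (1 + (1 + h) * m) * \<chi> (1 + (1 + h) * m) = \<tau> (1 + m) * \<chi> (1 + m)"
    if m: "m \<in> M" "G m \<noteq> 0" for m
  proof -
    have "\<forall>i\<in>char_kernel \<chi>. i * m = 0"
      using gauss_sum_nonzero_annihilated[OF \<chi>(1) ring_ideal_char_kernel[OF \<chi>(1)] char_kernel_subset]
        char_kernel_trivial m(2) by blast
    then have hm: "h * m \<in> socle" using h(2) by (simp add: socle_def mult.assoc[symmetric])
    have "1 + (1 + h) * m = (1 + m) + h * m" by (simp add: algebra_simps)
    then show ?thesis
      using nonprimitive_char_add_socle[OF \<tau> one_add_max_ideal[OF m(1)] hm]
        nonprimitive_char_add_socle[OF \<chi> one_add_max_ideal[OF m(1)] hm] by (simp only:)
  qed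
  then show ?thesis using that one_add_max_ideal[OF h(1)] h(3) by blast
qed

end

theorem mainTheorem10:
  fixes \<psi> \<tau> \<chi> :: "'a::{comm_ring_1, finite} \<Rightarrow> complex"
  assumes "local_ring TYPE('a)"
    and "frobenius TYPE('a)"
    and "\<not> is_field_ring TYPE('a)"
    and "odd (residue_char TYPE('a))"
    and "primitive_add_char \<psi>"
    and "mult_char \<tau>" and "\<not> primitive_mult_char \<tau>"
    and "mult_char \<chi>" and "\<not> primitive_mult_char \<chi>"
  shows "(\<Sum>a\<in>units. \<chi> a * complex_of_real ((cmod (kloosterman \<psi> \<tau> a))\<^sup>2)) =
           (if trivial_char \<chi> \<or> (\<forall>u\<in>units. \<chi> u = quad_char u)
            then of_nat (card (units::'a set) * card (UNIV::'a set)) else 0)"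
proof -
  interpret kloosterman_setting "TYPE('a)" \<psi> \<tau> \<chi>
    using assms by unfold_locales auto
  have two: "2 \<notin> M" by (rule two_notin_max_ideal[OF assms(4)])
  have "(\<Sum>a\<in>units. \<chi> a * complex_of_real ((cmod (kloosterman \<psi> \<tau> a))\<^sup>2)) = \<chi> (- 1) * reduced_sum"
    using sum_char_mult_kloosterman_norm_sq[OF add_char_psi \<tau>(1) \<chi>(1)] sum_gauss_products_eq_reduced_sum
    by simp
  moreover have "reduced_sum = 0" if "\<not> trivial_char \<chi>" "\<not> (\<forall>u\<in>U. \<chi> u = quad_char u)"
    using exists_scaling_unit[OF two that] reduced_sum_eq_0_if_scaling by metis
  ultimately show ?thesis
    using reduced_sum_trivial_char reduced_sum_quad_char by auto
qed

end
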